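(* Assume the setting of the context. The family $(E_g\cap Q_{g(u)})_{g\in\Gamma}$ is locally finite in $\tilde L$.
   Context: Let $\tilde L=\{(z,\alpha,r)\in\mathbb C\times\mathbb R\times\mathbb R_{>0} : |z|<r\}$, $L=\{(z,w)\in\mathbb C^2: |z|<|w|\}$, and $\pi:\tilde L\to L$, $\pi(z,\alpha,r)=(z,re^{i\alpha})$ (a universal covering). Equip $\mathbb C^2$ with the real symmetric bilinear form $\langle (z_1,w_1),(z_2,w_2)\rangle=\mathrm{Re}(z_1\bar z_2-w_1\bar w_2)$. Let $G=\{(z,w):|z|^2-|w|^2=-1\}\subset L$, identified with $\mathrm{SU}(1,1)$ via $\begin{pmatrix} w&z\\ \bar z&\bar w\end{pmatrix}\mapsto (z,\bar w)$; left multiplication by $g\leftrightarrow(z_g,\bar w_g)$ extends to the $\mathbb R$-linear isometry $(z,v)\mapsto (w_g z+z_g v,\ \bar z_g z+\bar w_g v)$ of $\mathbb C^2$ preserving $L$. Let $\tilde G=\{(z,\alpha,r)\in\tilde L: |z|^2=r^2-1\}=\pi^{-1}(G)$, the universal cover $\widetilde{\mathrm{SU}}(1,1)$ with identity $e=(0,0,1)$; the left action of $G$ on $L$ lifts to a left action of $\tilde G$ on $\tilde L$ extending left multiplication on $\tilde G$. Elements of $\tilde G$ act on the unit disk $\mathbb D$ through $\mathrm{PSU}(1,1)$: $(z,\alpha,r)$ with $w=re^{-i\alpha}$ acts by $\zeta\mapsto (w\zeta+z)/(\bar z\zeta+\bar w)$. For $g\in\tilde G$ with $\bar g=\pi(g)$,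 let $\bar I_{\bar g}=\{a\in L:\langle \bar g,a\rangle\le -1\}$, $\bar E_{\bar g}=\{a\in L:\langle\bar g,a\rangle=-1\}$; let $I_g$, $E_g$ be the connected components of $\pi^{-1}(\bar I_{\bar g})$, $\pi^{-1}(\bar E_{\bar g})$ containing $g$; $E_g$ separates $\tilde L$ into two components, the closure of one being $I_g$; let $H_g$ be the closure of the other (so $\partial H_g=E_g$). Let $\Gamma\subset\tilde G$ be a discrete subgroup of finite level $k$ (the index of $\Gamma\cap Z$ in the infinite cyclic centre $Z$ of $\tilde G$), let $\bar\Gamma$ be its image in $\mathrm{PSU}(1,1)$, and let $u\in\mathbb D$ be a point fixed by a nontrivial element of $\bar\Gamma$, with isotropy group $\bar\Gamma_u$ of order $p$. Assume $p>k$ and (after conjugation) $u=0$. For $x$ in the orbit $\Gamma(u)$ let $T(x)=\{g\in\Gamma: g(u)=x\}$ and $Q_x=\bigcap_{g\in T(x)}H_g$. *)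

theory Defs
  imports "HOL-Analysis.Analysis"
begin

text \<open>Points of the universal cover tilde L are triples (z, alpha, r).\<close>
type_synonym pt = "complex \<times> real \<times> real"

definition Lt :: "pt set" where
  "Lt = {(z, \<alpha>, r). r > 0 \<and> cmod z < r}"

definition Lset :: "(complex \<times> complex) set" where
  "Lset = {(z, w). cmod z < cmod w}"

definition proj :: "pt \<Rightarrow> complex \<times> complex" where
  "proj p = (case p of (z, \<alpha>, r) \<Rightarrow> (z, complex_of_real r * cis \<alpha>))"

definition form :: "complex \<times> complex \<Rightarrow> complex \<times> complex \<Rightarrow> real" where
  "form a b = Re (fst a * cnj (fst b) - snd a * cnj (snd b))"

definition Gt :: "pt set" where
  "Gt = {(z, \<alpha>, r). (z, \<alpha>, r) \<in> Lt \<and> (cmod z)^2 = r^2 - 1}"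

definition e_t :: pt where "e_t = (0, 0, 1)"

text \<open>Lifted left action of tilde G on tilde L (restricting to the group law on tilde G).
  For g = (zg, ag, rg) with image (zg, vg) in G (vg = conj wg) and a = (z, al, r) with
  image (z, v), the image of g.a in L is (wg z + zg v, conj zg z + vg v); the new
  argument is ag + al + Arg(1 + t) with t = conj zg z / (vg v), |t| < 1; this is the
  continuous lift that restricts to the identity at g = e.\<close>
definition act :: "pt \<Rightarrow> pt \<Rightarrow> pt" where
  "act g a = (case g of (zg, ag, rg) \<Rightarrow> case a of (z, al, r) \<Rightarrow>
     let vg = complex_of_real rg * cis ag; wg = cnj vg; v = complex_of_real r * cis al;
         t = cnj zg * z / (vg * v)
     in (wg * z + zg * v, ag + al + Arg (1 + t), cmod (cnj zg * z + vg * v)))"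

text \<open>Action of tilde G on the unit disk through PSU(1,1).\<close>
definition mob :: "pt \<Rightarrow> complex \<Rightarrow> complex" where
  "mob g \<zeta> = (case g of (z, \<alpha>, r) \<Rightarrow>
     let w = complex_of_real r * cis (- \<alpha>) in (w * \<zeta> + z) / (cnj z * \<zeta> + cnj w))"

text \<open>Centre of tilde G (the lifts of +-I).\<close>
definition Zc :: "pt set" where
  "Zc = {c \<in> Gt. \<forall>g \<in> Gt. act c g = act g c}"

definition subgroup_Gt :: "pt set \<Rightarrow> bool" where
  "subgroup_Gt \<Gamma> \<longleftrightarrow> \<Gamma> \<subseteq> Gt \<and> e_t \<in> \<Gamma> \<and> (\<forall>g\<in>\<Gamma>. \<forall>h\<in>\<Gamma>. act g h \<in> \<Gamma>)
     \<and> (\<forall>g\<in>\<Gamma>. \<exists>h\<in>\<Gamma>. act g h = e_t \<and> act h g = e_t)"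

text \<open>Finite level k: the index of Gamma \<inter> Z in Z is k. The centre Z is infinite
  cyclic, generated by (0, pi, 1), so this means Gamma \<inter> Z is generated by (0, k pi, 1).\<close>
definition has_level :: "pt set \<Rightarrow> nat \<Rightarrow> bool" where
  "has_level \<Gamma> k \<longleftrightarrow> k > 0 \<and>
     \<Gamma> \<inter> Zc = {(0, of_int (int k * n) * pi, 1) | n. True}"

definition Ebar :: "complex \<times> complex \<Rightarrow> (complex \<times> complex) set" where
  "Ebar gb = {a \<in> Lset. form gb a = -1}"

definition Ibar :: "complex \<times> complex \<Rightarrow> (complex \<times> complex) set" where
  "Ibar gb = {a \<in> Lset. form gb a \<le> -1}"

definition Eg :: "pt \<Rightarrow> pt set" where
  "Eg g = connected_component_set (Lt \<inter> proj -` Ebar (proj g)) g"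

definition Ig :: "pt \<Rightarrow> pt set" where
  "Ig g = connected_component_set (Lt \<inter> proj -` Ibar (proj g)) g"

definition Hg :: "pt \<Rightarrow> pt set" where
  "Hg g = Lt \<inter> closure (\<Union>{C \<in> components (Lt - Eg g). Lt \<inter> closure C \<noteq> Ig g})"

definition Qx :: "pt set \<Rightarrow> complex \<Rightarrow> complex \<Rightarrow> pt set" where
  "Qx \<Gamma> u x = \<Inter>{Hg g | g. g \<in> \<Gamma> \<and> mob g u = x}"

text \<open>Isotropy group in PSU(1,1) (elements as maps of the unit disk).\<close>
definition isotropy_bar :: "pt set \<Rightarrow> complex \<Rightarrow> (complex \<Rightarrow> complex) set" where
  "isotropy_bar \<Gamma> u = {(\<lambda>\<zeta>. if cmod \<zeta> < 1 then mob g \<zeta> else 0) | g. g \<in> \<Gamma> \<and> mob g u = u}"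

end

theory Submission
  imports Defs
begin

(* Left translation by an element g of tilde G is a homeomorphism of tilde L preserving the form,
   so E_g, I_g and H_g are the translates by g of E_e, I_e and H_e.  At the identity E_e is the
   sheet {|alpha| < pi/2, r cos alpha = 1}, and H_e misses the region {|alpha| < pi/2, r cos alpha > 1}
   in front of it.  Since p > k, Gamma contains a rotation (0, theta, 1) with 0 < theta < pi; the
   elements g (0, theta, 1) and g (0, -theta, 1) also map u = 0 to g(u), so every point of
   E_g \<inter> Q_g(u) is g c with c in E_e and |arg c| <= theta/2.  For such points near a fixed
   point of tilde L this bounds g, and a discrete subgroup has only finitely many elements in a
   bounded set. *)

section \<open>Homeomorphisms and the sides of a hypersurface\<close>

lemma homeomorphism_inj_on: "homeomorphism S T f f' \<Longrightarrow> inj_on f S"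
  by (metis homeomorphism_apply1 inj_on_inverseI)

lemma homeomorphism_connected_component_image:
  assumes h: "homeomorphism S T f f'" and A: "A \<subseteq> S" and x: "x \<in> S"
  shows "connected_component_set (f ` A) (f x) = f ` connected_component_set A x"
proof (cases "x \<in> A")
  case True
  have "homeomorphism A (f ` A) f f'"
    using homeomorphism_of_subsets[OF h A] h A by (auto simp: homeomorphism_def)
  then show ?thesis
    using connected_component_set_homeomorphism True by blast
next
  case False
  then have "f x \<notin> f ` A"
    using homeomorphism_inj_on[OF h] A x by (meson inj_on_image_mem_iff)
  then have "connected_component_set (f ` A) (f x) = {}" "connected_component_set A x = {}"
    using False connected_component_eq_empty by blast+
  then show ?thesis
    by (metis image_empty)
qed

lemma homeomorphism_components_image:
  assumes h: "homeomorphism S T f f'" and A: "A \<subseteq> S"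
  shows "components (f ` A) = image f ` components A"
proof -
  have "components (f ` A) = (\<lambda>x. connected_component_set (f ` A) (f x)) ` A"
    unfolding components_def by (simp add: image_image)
  also have "\<dots> = (\<lambda>x. f ` connected_component_set A x) ` A"
    using homeomorphism_connected_component_image[OF h A] A by (intro image_cong) auto
  finally show ?thesis
    unfolding components_def by (simp add: image_image)
qed

lemma homeomorphism_closure_image:
  assumes h: "homeomorphism S T f f'" and C: "C \<subseteq> S"
  shows "T \<inter> closure (f ` C) = f ` (S \<inter> closure C)"
proof -
  have "homeomorphic_maps (top_of_set S) (top_of_set T) f f'"
    using h by (force simp: Pi_iff homeomorphic_maps_def homeomorphism_def)
  then have "homeomorphic_map (top_of_set S) (top_of_set T) f"
    by (rule homeomorphic_maps_imp_map)
  then have "top_of_set T closure_of (f ` C) = f ` (top_of_set S closure_of C)"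
    using C by (simp add: homeomorphic_map_closure_of)
  moreover have "f ` C \<subseteq> T"
    using C homeomorphism_image1[OF h] by blast
  ultimately show ?thesis
    using C by (simp add: closure_of_subtopology Int_absorb1)
qed

definition far_side :: "'a::topological_space set \<Rightarrow> 'a set \<Rightarrow> 'a set \<Rightarrow> 'a set" where
  "far_side S E I = S \<inter> closure (\<Union>{C \<in> components (S - E). S \<inter> closure C \<noteq> I})"

lemma homeomorphism_far_side_image:
  assumes h: "homeomorphism S T f f'" and E: "E \<subseteq> S" and I: "I \<subseteq> S"
  shows "far_side T (f ` E) (f ` I) = f ` far_side S E I"
proof -
  have inj: "inj_on f S"
    by (rule homeomorphism_inj_on[OF h])
  have "T - f ` E = f ` (S - E)"
    using homeomorphism_image1[OF h] inj_on_image_set_diff[OF inj _ E] by simp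
  then have comps: "components (T - f ` E) = image f ` components (S - E)"
    using homeomorphism_components_image[OF h, of "S - E"] by auto
  have "T \<inter> closure (f ` C) \<noteq> f ` I \<longleftrightarrow> S \<inter> closure C \<noteq> I" if "C \<in> components (S - E)" for C
  proof -
    have "C \<subseteq> S"
      using that in_components_subset by blast
    then show ?thesis
      using homeomorphism_closure_image[OF h] inj_on_image_eq_iff[OF inj _ I] by auto
  qed
  then have "{C \<in> components (T - f ` E). T \<inter> closure C \<noteq> f ` I}
      = image f ` {C \<in> components (S - E). S \<inter> closure C \<noteq> I}"
    unfolding comps by auto
  then have "\<Union>{C \<in> components (T - f ` E). T \<inter> closure C \<noteq> f ` I}
      = f ` \<Union>{C \<in> components (S - E). S \<inter> closure C \<noteq> I}"
    by (simp add: image_Union)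
  moreover have "\<Union>{C \<in> components (S - E). S \<inter> closure C \<noteq> I} \<subseteq> S"
    using in_components_subset by blast
  ultimately show ?thesis
    unfolding far_side_def using homeomorphism_closure_image[OF h] by simp
qed

lemma far_side_subset:
  assumes A: "A \<in> components (S - E)" "S \<inter> closure A = I" "open A"
  shows "far_side S E I \<subseteq> S - A"
proof -
  have "\<Union>{C \<in> components (S - E). S \<inter> closure C \<noteq> I} \<subseteq> - A"
    using A(1,2) components_nonoverlap by fastforce
  then have "closure (\<Union>{C \<in> components (S - E). S \<inter> closure C \<noteq> I}) \<subseteq> - A"
    using A(3) by (simp add: closure_minimal closed_Compl)
  then show ?thesis
    unfolding far_side_def by blast
qed

lemma connected_component_set_eq_Int_open:
  assumes "connected (S \<inter> U)" "x \<in> S \<inter> U" "open U" "open V" "S \<subseteq> U \<union> V" "U \<inter> V = {}"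
  shows "connected_component_set S x = S \<inter> U"
proof
  show "S \<inter> U \<subseteq> connected_component_set S x"
    using assms(1,2) by (simp add: connected_component_maximal)
  have "U \<inter> connected_component_set S x = {} \<or> V \<inter> connected_component_set S x = {}"
    using assms connected_component_subset[of S x]
    by (intro connectedD[OF connected_connected_component]) auto
  then show "connected_component_set S x \<subseteq> S \<inter> U"
    using assms(2,5) connected_component_subset[of S x] connected_component_refl[of x S] by blast
qed

section \<open>The lifted action of tilde G on tilde L\<close>

definition pt_inv :: "pt \<Rightarrow> pt" where
  "pt_inv g = (case g of (z, a, r) \<Rightarrow> (- z, - a, r))"

text \<open>The isometry \<open>(z, v) \<mapsto> (w\<^sub>g z + z\<^sub>g v, conj z\<^sub>g z + conj w\<^sub>g v)\<close> of \<open>C\<^sup>2\<close>,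
  where \<open>proj g = (z\<^sub>g, conj w\<^sub>g)\<close>.\<close>
definition lin_act :: "pt \<Rightarrow> complex \<times> complex \<Rightarrow> complex \<times> complex" where
  "lin_act g p = (case g of (zg, ag, rg) \<Rightarrow>
     (cnj (of_real rg * cis ag) * fst p + zg * snd p, cnj zg * fst p + (of_real rg * cis ag) * snd p))"

lemma act_explicit: "act (zg, ag, rg) (z, al, r) =
  (cnj (of_real rg * cis ag) * z + zg * (of_real r * cis al),
   ag + al + Arg (1 + cnj zg * z / ((of_real rg * cis ag) * (of_real r * cis al))),
   cmod (cnj zg * z + (of_real rg * cis ag) * (of_real r * cis al)))"
  by (simp add: act_def Let_def)

lemma mem_Lt_iff: "(z, a, r) \<in> Lt \<longleftrightarrow> 0 < r \<and> cmod z < r"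
  by (simp add: Lt_def)

lemma mem_Gt_iff: "(z, a, r) \<in> Gt \<longleftrightarrow> 0 < r \<and> cmod z < r \<and> (cmod z)\<^sup>2 = r\<^sup>2 - 1"
  by (simp add: Gt_def Lt_def)

lemma mem_Gt_iff_one_le: "(z, a, r) \<in> Gt \<longleftrightarrow> 1 \<le> r \<and> (cmod z)\<^sup>2 = r\<^sup>2 - 1"
proof -
  have "0 < r \<and> cmod z < r \<longleftrightarrow> 1 \<le> r" if "(cmod z)\<^sup>2 = r\<^sup>2 - 1"
  proof
    assume "0 < r \<and> cmod z < r"
    moreover have "1\<^sup>2 \<le> r\<^sup>2"
      using that by (metis diff_ge_0_iff_ge zero_le_power2 power_one)
    ultimately show "1 \<le> r"
      by (meson less_imp_le power2_le_imp_le)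
  next
    assume "1 \<le> r"
    then show "0 < r \<and> cmod z < r"
      using that by (auto intro: power2_less_imp_less)
  qed
  then show ?thesis
    unfolding mem_Gt_iff by blast
qed

lemma Gt_subset_Lt: "Gt \<subseteq> Lt"
  by (auto simp: Gt_def)

lemma e_t_in_Gt: "e_t \<in> Gt"
  by (simp add: e_t_def mem_Gt_iff)

lemma e_t_in_Lt: "e_t \<in> Lt"
  using e_t_in_Gt Gt_subset_Lt by blast

lemma pt_inv_in_Gt: "g \<in> Gt \<Longrightarrow> pt_inv g \<in> Gt"
  by (cases g) (auto simp: pt_inv_def mem_Gt_iff)

lemma pt_inv_pt_inv [simp]: "pt_inv (pt_inv g) = g"
  by (cases g) (simp add: pt_inv_def)

lemma Gt_det_eq_1:
  assumes "(zg, ag, rg) \<in> Gt"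
  shows "(of_real rg * cis ag) * cnj (of_real rg * cis ag) - zg * cnj zg = 1"
proof -
  have "(of_real rg * cis ag) * cnj (of_real rg * cis ag) = of_real (rg\<^sup>2)"
    by (simp add: power2_eq_square cis_cnj cis_mult algebra_simps)
  moreover have "zg * cnj zg = of_real (rg\<^sup>2 - 1)"
    using assms by (simp add: complex_norm_square[symmetric] mem_Gt_iff)
  ultimately show ?thesis
    by simp
qed

lemma cmod_act_quotient_lt_1:
  assumes "0 < rg" "cmod zg < rg" "0 < r" "cmod z < r"
  shows "cmod (cnj zg * z / ((of_real rg * cis ag) * (of_real r * cis al))) < 1"
proof -
  have "cmod (cnj zg * z / ((of_real rg * cis ag) * (of_real r * cis al))) = cmod zg * cmod z / (rg * r)"
    using assms by (simp add: norm_mult norm_divide)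
  also have "\<dots> < 1"
    using assms by (simp add: mult_strict_mono)
  finally show ?thesis .
qed

lemma Re_one_plus_pos: "cmod t < 1 \<Longrightarrow> 0 < Re (1 + t)"
  using abs_Re_le_cmod[of t] by simp

lemma proj_act:
  assumes "g \<in> Lt" "c \<in> Lt"
  shows "proj (act g c) = lin_act g (proj c)"
proof -
  obtain zg ag rg z al r where gc: "g = (zg, ag, rg)" "c = (z, al, r)"
    by (cases g, cases c) auto
  define vg where "vg = of_real rg * cis ag"
  define v where "v = of_real r * cis al"
  define t where "t = cnj zg * z / (vg * v)"
  have pos: "0 < rg" "cmod zg < rg" "0 < r" "cmod z < r"
    using assms gc by (auto simp: mem_Lt_iff)
  have "cmod t < 1"
    unfolding t_def vg_def v_def using cmod_act_quotient_lt_1 pos by blast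
  have "vg * v \<noteq> 0"
    using pos by (simp add: vg_def v_def)
  then have sum_eq: "cnj zg * z + vg * v = vg * v * (1 + t)"
    by (simp add: t_def distrib_left)
  have "cmod (cnj zg * z + vg * v) = rg * r * cmod (1 + t)"
    unfolding sum_eq norm_mult using pos by (simp add: vg_def v_def norm_mult)
  then have "of_real (cmod (cnj zg * z + vg * v)) * cis (ag + al + Arg (1 + t))
      = vg * v * (of_real (cmod (1 + t)) * cis (Arg (1 + t)))"
    by (simp add: vg_def v_def cis_mult[symmetric] algebra_simps)
  also have "\<dots> = cnj zg * z + vg * v"
    using rcis_cmod_Arg[of "1 + t"] by (simp add: rcis_def sum_eq)
  finally have "of_real (cmod (cnj zg * z + vg * v)) * cis (ag + al + Arg (1 + t)) = cnj zg * z + vg * v" .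
  moreover have "act g c = (cnj vg * z + zg * v, ag + al + Arg (1 + t), cmod (cnj zg * z + vg * v))"
    unfolding gc act_explicit vg_def v_def t_def ..
  ultimately show ?thesis
    by (simp add: proj_def lin_act_def gc vg_def v_def)
qed

lemma form_lin_act:
  assumes "g \<in> Gt"
  shows "form (lin_act g p) (lin_act g q) = form p q"
proof -
  obtain zg ag rg where g: "g = (zg, ag, rg)"
    by (cases g) auto
  obtain z1 v1 z2 v2 where pq: "p = (z1, v1)" "q = (z2, v2)"
    by fastforce
  define vg where "vg = of_real rg * cis ag"
  have "(cnj vg * z1 + zg * v1) * cnj (cnj vg * z2 + zg * v2) - (cnj zg * z1 + vg * v1) * cnj (cnj zg * z2 + vg * v2)
     = (vg * cnj vg - zg * cnj zg) * (z1 * cnj z2 - v1 * cnj v2)"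
    by (simp add: algebra_simps)
  then have "form (lin_act g p) (lin_act g q) = Re ((vg * cnj vg - zg * cnj zg) * (z1 * cnj z2 - v1 * cnj v2))"
    by (simp only: form_def lin_act_def g pq prod.case fst_conv snd_conv vg_def[symmetric])
  also have "\<dots> = form p q"
    using Gt_det_eq_1[of zg ag rg] assms g unfolding vg_def[symmetric] by (simp add: form_def pq)
  finally show ?thesis .
qed

lemma lin_act_pt_inv:
  assumes "g \<in> Gt"
  shows "lin_act g (lin_act (pt_inv g) p) = p"
proof -
  obtain zg ag rg where g: "g = (zg, ag, rg)"
    by (cases g) auto
  obtain z v where p: "p = (z, v)"
    by fastforce
  define vg where "vg = of_real rg * cis ag"
  have "of_real rg * cis (- ag) = cnj vg"
    by (simp add: vg_def cis_cnj)
  then have "lin_act g (lin_act (pt_inv g) p) = (cnj vg * (vg * z + - zg * v) + zg * (cnj (- zg) * z + cnj vg * v),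
      cnj zg * (vg * z + - zg * v) + vg * (cnj (- zg) * z + cnj vg * v))"
    by (simp only: lin_act_def pt_inv_def g p prod.case fst_conv snd_conv complex_cnj_cnj vg_def[symmetric])
  also have "\<dots> = ((vg * cnj vg - zg * cnj zg) * z, (vg * cnj vg - zg * cnj zg) * v)"
    by (simp add: algebra_simps)
  finally show ?thesis
    using Gt_det_eq_1[of zg ag rg] assms g p by (simp add: vg_def)
qed

lemma form_self: "form p p = (cmod (fst p))\<^sup>2 - (cmod (snd p))\<^sup>2"
  unfolding form_def cmod_power2 by (simp add: power2_eq_square)

lemma form_proj_self:
  assumes "(z, a, r) \<in> Lt"
  shows "form (proj (z, a, r)) (proj (z, a, r)) = (cmod z)\<^sup>2 - r\<^sup>2"
  using assms by (simp add: form_self proj_def norm_mult mem_Lt_iff)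

lemma form_act:
  assumes "g \<in> Gt" "x \<in> Lt" "c \<in> Lt"
  shows "form (proj (act g x)) (proj (act g c)) = form (proj x) (proj c)"
proof -
  have "g \<in> Lt"
    using assms(1) Gt_subset_Lt by blast
  then show ?thesis
    using assms by (simp add: proj_act form_lin_act)
qed

lemma act_in_Lt:
  assumes g: "g \<in> Gt" and c: "c \<in> Lt"
  shows "act g c \<in> Lt"
proof -
  obtain z al r z' al' r' where cc: "c = (z, al, r)" and b: "act g c = (z', al', r')"
    by (cases c, cases "act g c") auto
  have "0 \<le> r'"
    using b by (cases g) (auto simp: act_explicit cc)
  have "form (proj (z', al', r')) (proj (z', al', r')) = form (proj (z, al, r)) (proj (z, al, r))"
    using form_act[OF g c c] unfolding b by (simp add: cc)
  then have "(cmod z')\<^sup>2 - r'\<^sup>2 = (cmod z)\<^sup>2 - r\<^sup>2"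
    using \<open>0 \<le> r'\<close> c by (simp add: cc form_self proj_def norm_mult form_proj_self)
  moreover have "(cmod z)\<^sup>2 < r\<^sup>2"
    using c cc by (simp add: mem_Lt_iff power_strict_mono)
  ultimately have "cmod z' < r'"
    using \<open>0 \<le> r'\<close> by (smt (verit) norm_ge_zero power_mono)
  then show ?thesis
    using b norm_ge_zero[of z'] by (simp add: mem_Lt_iff del: norm_ge_zero)
qed

lemma abs_Arg_one_plus_lt: "cmod t < 1 \<Longrightarrow> \<bar>Arg (1 + t)\<bar> < pi / 2"
  using Arg_Re_pos Re_one_plus_pos by blast

lemma act_angle_near_sum:
  assumes "g \<in> Lt" "c \<in> Lt"
  shows "\<bar>fst (snd (act g c)) - (fst (snd g) + fst (snd c))\<bar> < pi / 2"
proof -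
  obtain zg ag rg z al r where gc: "g = (zg, ag, rg)" "c = (z, al, r)"
    by (cases g, cases c) auto
  have "0 < rg" "cmod zg < rg" "0 < r" "cmod z < r"
    using assms gc by (auto simp: mem_Lt_iff)
  then show ?thesis
    using abs_Arg_one_plus_lt[OF cmod_act_quotient_lt_1] by (simp add: gc act_explicit)
qed

lemma proj_eq_imp_eq:
  assumes "x \<in> Lt" "y \<in> Lt" "proj x = proj y" "\<bar>fst (snd x) - fst (snd y)\<bar> < 2 * pi"
  shows "x = y"
proof -
  obtain z a r z' a' r' where xy: "x = (z, a, r)" "y = (z', a', r')"
    by (cases x, cases y) auto
  have "0 < r" "0 < r'"
    using assms(1,2) xy by (auto simp: mem_Lt_iff)
  have "z = z'" and w: "of_real r * cis a = of_real r' * cis a'"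
    using assms(3) xy by (auto simp: proj_def)
  have "r = r'"
    using arg_cong[OF w, of cmod] \<open>0 < r\<close> \<open>0 < r'\<close> by (simp add: norm_mult)
  then have "cis a = cis a'"
    using w \<open>0 < r\<close> by simp
  then have "sin a = sin a' \<and> cos a = cos a'"
    by (metis cis.sel)
  then obtain n :: int where n: "a = a' + 2 * pi * n"
    using sin_cos_eq_iff by blast
  have "\<bar>2 * pi * n\<bar> < 2 * pi"
    using assms(4) xy n by simp
  then have "n = 0"
    by (simp add: abs_mult)
  then show ?thesis
    using xy \<open>z = z'\<close> \<open>r = r'\<close> n by simp
qed

lemma act_act_pt_inv:
  assumes g: "g \<in> Gt" and b: "b \<in> Lt"
  shows "act g (act (pt_inv g) b) = b"
proof (rule proj_eq_imp_eq)
  have g': "pt_inv g \<in> Gt"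
    using g by (rule pt_inv_in_Gt)
  then have c: "act (pt_inv g) b \<in> Lt"
    using b by (rule act_in_Lt)
  show "act g (act (pt_inv g) b) \<in> Lt"
    using g c by (rule act_in_Lt)
  show "b \<in> Lt"
    by (fact b)
  have "g \<in> Lt" "pt_inv g \<in> Lt"
    using g g' Gt_subset_Lt by auto
  then show "proj (act g (act (pt_inv g) b)) = proj b"
    using b c g by (simp add: proj_act lin_act_pt_inv)
  have "fst (snd (pt_inv g)) = - fst (snd g)"
    by (cases g) (simp add: pt_inv_def)
  then show "\<bar>fst (snd (act g (act (pt_inv g) b))) - fst (snd b)\<bar> < 2 * pi"
    using act_angle_near_sum[OF \<open>g \<in> Lt\<close> c] act_angle_near_sum[OF \<open>pt_inv g \<in> Lt\<close> b] pi_gt_zero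
    by linarith
qed

lemma act_pt_inv_act: "g \<in> Gt \<Longrightarrow> b \<in> Lt \<Longrightarrow> act (pt_inv g) (act g b) = b"
  using act_act_pt_inv[OF pt_inv_in_Gt] by fastforce

lemma act_e_t: "g \<in> Gt \<Longrightarrow> act g e_t = g"
  by (cases g) (auto simp: act_explicit e_t_def mem_Gt_iff norm_mult)

lemma open_Lt: "open Lt"
proof -
  have "Lt = {p. 0 < snd (snd p)} \<inter> {p. cmod (fst p) < snd (snd p)}"
    by (auto simp: Lt_def)
  moreover have "open {p::pt. 0 < snd (snd p)}" "open {p::pt. cmod (fst p) < snd (snd p)}"
    by (intro open_Collect_less continuous_intros)+
  ultimately show ?thesis
    by (metis open_Int)
qed

lemma continuous_on_act: "continuous_on (Lt \<times> Lt) (\<lambda>p. act (fst p) (snd p))"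
proof -
  let ?v = "\<lambda>x::pt. of_real (snd (snd x)) * cis (fst (snd x))"
  have act_eq: "act g c = (cnj (?v g) * fst c + fst g * ?v c,
      fst (snd g) + fst (snd c) + Arg (1 + cnj (fst g) * fst c / (?v g * ?v c)),
      cmod (cnj (fst g) * fst c + ?v g * ?v c))" for g c
    by (cases g; cases c) (simp add: act_explicit)
  have "?v (fst p) * ?v (snd p) \<noteq> 0" if "p \<in> Lt \<times> Lt" for p
    using that by (auto simp: Lt_def)
  moreover have "1 + cnj (fst (fst p)) * fst (snd p) / (?v (fst p) * ?v (snd p)) \<notin> \<real>\<^sub>\<le>\<^sub>0"
    if "p \<in> Lt \<times> Lt" for p
  proof -
    obtain zg ag rg z al r where p: "p = ((zg, ag, rg), (z, al, r))"
      by (cases p) auto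
    have "0 < rg" "cmod zg < rg" "0 < r" "cmod z < r"
      using that p by (auto simp: mem_Lt_iff)
    then have "0 < Re (1 + cnj zg * z / ((of_real rg * cis ag) * (of_real r * cis al)))"
      using Re_one_plus_pos cmod_act_quotient_lt_1 by blast
    then show ?thesis
      using p by (auto simp: complex_nonpos_Reals_iff)
  qed
  ultimately show ?thesis
    unfolding act_eq by (intro continuous_intros continuous_on_Arg') auto
qed

lemma homeomorphism_act:
  assumes g: "g \<in> Gt"
  shows "homeomorphism Lt Lt (act g) (act (pt_inv g))"
proof
  have cont: "continuous_on Lt (act h)" if "h \<in> Lt" for h
  proof -
    have "continuous_on Lt (Pair h)" "Pair h ` Lt \<subseteq> Lt \<times> Lt"
      using that by (auto intro: continuous_intros)
    from continuous_on_compose2[OF continuous_on_act this] show ?thesis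
      by simp
  qed
  have g': "pt_inv g \<in> Gt"
    using g by (rule pt_inv_in_Gt)
  show "continuous_on Lt (act g)" "continuous_on Lt (act (pt_inv g))"
    using g g' Gt_subset_Lt cont by blast+
  show "act g ` Lt \<subseteq> Lt" "act (pt_inv g) ` Lt \<subseteq> Lt"
    using g g' act_in_Lt by blast+
  show "act (pt_inv g) (act g x) = x" "act g (act (pt_inv g) x) = x" if "x \<in> Lt" for x
    using g that act_act_pt_inv act_pt_inv_act by blast+
qed

section \<open>Translates of E, I and H\<close>

lemma proj_in_Lset: "b \<in> Lt \<Longrightarrow> proj b \<in> Lset"
  by (cases b) (auto simp: mem_Lt_iff Lset_def proj_def norm_mult)

lemma Lt_Int_vimage_Lset: "Lt \<inter> proj -` {a \<in> Lset. Q a} = {b \<in> Lt. Q (proj b)}"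
  using proj_in_Lset by auto

lemma Collect_Lt_eq_act_image:
  assumes g: "g \<in> Gt"
  shows "{b \<in> Lt. Q b} = act g ` {c \<in> Lt. Q (act g c)}"
proof
  show "{b \<in> Lt. Q b} \<subseteq> act g ` {c \<in> Lt. Q (act g c)}"
  proof
    fix b
    assume "b \<in> {b \<in> Lt. Q b}"
    then have b: "b \<in> Lt" "Q b"
      by simp_all
    have "b = act g (act (pt_inv g) b)"
      using act_act_pt_inv[OF g b(1)] by simp
    moreover have "act (pt_inv g) b \<in> {c \<in> Lt. Q (act g c)}"
      using act_in_Lt[OF pt_inv_in_Gt[OF g] b(1)] b(2) calculation by simp
    ultimately show "b \<in> act g ` {c \<in> Lt. Q (act g c)}"
      by (rule image_eqI)
  qed
  show "act g ` {c \<in> Lt. Q (act g c)} \<subseteq> {b \<in> Lt. Q b}"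
    using act_in_Lt[OF g] by blast
qed

lemma level_set_act:
  assumes g: "g \<in> Gt" and x: "x \<in> Lt"
  shows "Lt \<inter> proj -` {a \<in> Lset. P (form (proj (act g x)) a)}
    = act g ` (Lt \<inter> proj -` {a \<in> Lset. P (form (proj x) a)})"
proof -
  have "Lt \<inter> proj -` {a \<in> Lset. P (form (proj (act g x)) a)} = {b \<in> Lt. P (form (proj (act g x)) (proj b))}"
    by (rule Lt_Int_vimage_Lset)
  also have "\<dots> = act g ` {c \<in> Lt. P (form (proj (act g x)) (proj (act g c)))}"
    by (rule Collect_Lt_eq_act_image[OF g])
  also have "\<dots> = act g ` {c \<in> Lt. P (form (proj x) (proj c))}"
    using form_act[OF g x] by (intro arg_cong[where f = "image (act g)"] Collect_cong) auto
  finally show ?thesis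
    by (simp only: Lt_Int_vimage_Lset)
qed

lemma Eg_act:
  assumes g: "g \<in> Gt" and x: "x \<in> Lt"
  shows "Eg (act g x) = act g ` Eg x"
proof -
  have "Lt \<inter> proj -` Ebar (proj (act g x)) = act g ` (Lt \<inter> proj -` Ebar (proj x))"
    using level_set_act[OF g x, of "\<lambda>t. t = -1"] by (simp add: Ebar_def)
  then show ?thesis
    unfolding Eg_def
    by (metis homeomorphism_connected_component_image[OF homeomorphism_act[OF g] _ x] inf_le1)
qed

lemma Ig_act:
  assumes g: "g \<in> Gt" and x: "x \<in> Lt"
  shows "Ig (act g x) = act g ` Ig x"
proof -
  have "Lt \<inter> proj -` Ibar (proj (act g x)) = act g ` (Lt \<inter> proj -` Ibar (proj x))"
    using level_set_act[OF g x, of "\<lambda>t. t \<le> -1"] by (simp add: Ibar_def)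
  then show ?thesis
    unfolding Ig_def
    by (metis homeomorphism_connected_component_image[OF homeomorphism_act[OF g] _ x] inf_le1)
qed

lemma Hg_eq_far_side: "Hg g = far_side Lt (Eg g) (Ig g)"
  by (simp add: Hg_def far_side_def)

lemma Hg_act:
  assumes g: "g \<in> Gt" and x: "x \<in> Lt"
  shows "Hg (act g x) = act g ` Hg x"
proof -
  have "Eg x \<subseteq> Lt" "Ig x \<subseteq> Lt"
    unfolding Eg_def Ig_def using connected_component_subset by blast+
  then show ?thesis
    unfolding Hg_eq_far_side Eg_act[OF g x] Ig_act[OF g x]
    by (rule homeomorphism_far_side_image[OF homeomorphism_act[OF g]])
qed

section \<open>The picture at the identity\<close>

text \<open>Since \<open>form (proj e_t) (proj (z, \<alpha>, r)) = - r cos \<alpha>\<close>, the sets \<open>E_e\<close> and \<open>I_e\<close> are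
  \<open>sheet {1}\<close> and \<open>sheet {1..}\<close>: the branch \<open>|\<alpha>| < pi/2\<close> of the level sets of \<open>r cos \<alpha>\<close>.\<close>
definition sheet :: "real set \<Rightarrow> pt set" where
  "sheet T = {(z, a, r). (z, a, r) \<in> Lt \<and> \<bar>a\<bar> < pi / 2 \<and> r * cos a \<in> T}"

lemma mem_sheet_iff: "(z, a, r) \<in> sheet T \<longleftrightarrow> (z, a, r) \<in> Lt \<and> \<bar>a\<bar> < pi / 2 \<and> r * cos a \<in> T"
  by (simp add: sheet_def)

(* In the coordinates z / r, alpha and r cos alpha a sheet is a product of convex sets. *)
lemma sheet_eq_image:
  assumes T: "T \<subseteq> {0<..}"
  shows "sheet T = (\<lambda>(\<zeta>, a, s). (\<zeta> * of_real (s / cos a), a, s / cos a)) ` (ball 0 1 \<times> {-pi/2<..<pi/2} \<times> T)"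
    (is "_ = ?f ` ?D")
proof
  show "?f ` ?D \<subseteq> sheet T"
  proof
    fix p
    assume "p \<in> ?f ` ?D"
    then obtain q where q: "q \<in> ?D" "p = ?f q"
      by blast
    obtain \<zeta> a s where q_eq: "q = (\<zeta>, a, s)"
      by (cases q)
    have D: "cmod \<zeta> < 1" "- (pi / 2) < a" "a < pi / 2" "s \<in> T"
      using q(1) by (simp_all add: q_eq)
    have "0 < cos a"
      using D(2,3) by (rule cos_gt_zero_pi)
    moreover have "0 < s"
      using D(4) T by auto
    ultimately have r: "0 < s / cos a" "s / cos a * cos a = s"
      by simp_all
    have "cmod (\<zeta> * of_real (s / cos a)) = cmod \<zeta> * (s / cos a)"
      by (simp only: norm_mult norm_of_real abs_of_pos[OF r(1)])
    also have "\<dots> < 1 * (s / cos a)"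
      using D(1) r(1) by (rule mult_strict_right_mono)
    finally have "cmod (\<zeta> * of_real (s / cos a)) < s / cos a"
      by simp
    moreover have "\<bar>a\<bar> < pi / 2"
      using D(2,3) by linarith
    ultimately show "p \<in> sheet T"
      using q(2) r D(4) by (simp add: q_eq mem_sheet_iff mem_Lt_iff)
  qed
  show "sheet T \<subseteq> ?f ` ?D"
  proof
    fix p
    assume p: "p \<in> sheet T"
    obtain z a r where p_eq: "p = (z, a, r)"
      by (cases p)
    have L: "0 < r" "cmod z < r" "\<bar>a\<bar> < pi / 2" "r * cos a \<in> T"
      using p by (simp_all add: p_eq mem_sheet_iff mem_Lt_iff)
    have a: "- (pi / 2) < a" "a < pi / 2"
      using L(3) by linarith+
    then have "0 < cos a"
      by (rule cos_gt_zero_pi)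
    then have "p = ?f (z / of_real r, a, r * cos a)"
      using L(1) by (simp add: p_eq)
    moreover have "(z / of_real r, a, r * cos a) \<in> ?D"
      using L a by (simp add: norm_divide)
    ultimately show "p \<in> ?f ` ?D"
      by (rule image_eqI)
  qed
qed

lemma connected_sheet:
  assumes "convex T" "T \<subseteq> {0<..}"
  shows "connected (sheet T)"
  unfolding sheet_eq_image[OF assms(2)]
proof (rule connected_continuous_image)
  show "connected (ball (0::complex) 1 \<times> {-pi/2<..<pi/2} \<times> T)"
    using assms(1) by (intro convex_connected convex_Times convex_ball) (auto simp: convex_real_interval)
  have "cos (fst (snd q)) \<noteq> 0" if "q \<in> ball (0::complex) 1 \<times> {-pi/2<..<pi/2} \<times> T" for q
    using that cos_gt_zero_pi[of "fst (snd q)"] by auto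
  then show "continuous_on (ball (0::complex) 1 \<times> {-pi/2<..<pi/2} \<times> T)
      (\<lambda>(\<zeta>, a, s). (\<zeta> * of_real (s / cos a), a, s / cos a))"
    unfolding case_prod_beta by (intro continuous_intros) auto
qed

lemma cos_eq_0_if_abs_eq_pi_half: "\<bar>a\<bar> = pi / 2 \<Longrightarrow> cos a = 0"
  by (metis abs_minus_cancel abs_of_nonneg abs_of_nonpos cos_minus cos_pi_half linorder_linear)

lemma form_e_t_proj: "form (proj e_t) (proj (z, a, r)) = - (r * cos a)"
  by (simp add: form_def proj_def e_t_def)

(* r cos alpha vanishes on |alpha| = pi/2, which therefore cuts off the branch through e_t. *)
lemma connected_component_e_t_eq_sheet:
  assumes T: "convex T" "T \<subseteq> {0<..}" "1 \<in> T"
    and S: "S \<subseteq> Lt" "\<And>z a r. (z, a, r) \<in> Lt \<Longrightarrow> (z, a, r) \<in> S \<longleftrightarrow> r * cos a \<in> T"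
  shows "connected_component_set S e_t = sheet T"
proof -
  let ?U = "{p::pt. \<bar>fst (snd p)\<bar> < pi / 2}" and ?V = "{p::pt. pi / 2 < \<bar>fst (snd p)\<bar>}"
  have S_iff: "(z, a, r) \<in> S \<longleftrightarrow> (z, a, r) \<in> Lt \<and> r * cos a \<in> T" for z a r
    using S by blast
  have "S \<inter> ?U = sheet T"
    by (auto simp: mem_sheet_iff S_iff)
  moreover have "connected_component_set S e_t = S \<inter> ?U"
  proof (rule connected_component_set_eq_Int_open)
    show "connected (S \<inter> ?U)"
      using \<open>S \<inter> ?U = sheet T\<close> connected_sheet T by simp
    show "e_t \<in> S \<inter> ?U"
      using T(3) by (simp add: e_t_def S_iff mem_Lt_iff)
    show "open ?U" "open ?V"
      by (intro open_Collect_less continuous_intros)+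
    show "S \<subseteq> ?U \<union> ?V"
    proof
      fix p
      assume "p \<in> S"
      moreover obtain z a r where p: "p = (z, a, r)"
        by (cases p)
      ultimately have "0 < r * cos a"
        using T(2) S_iff by blast
      then have "\<bar>a\<bar> \<noteq> pi / 2"
        using cos_eq_0_if_abs_eq_pi_half by force
      then show "p \<in> ?U \<union> ?V"
        using p by auto
    qed
    show "?U \<inter> ?V = {}"
      by auto
  qed
  ultimately show ?thesis
    by simp
qed

lemma Eg_e_t: "Eg e_t = sheet {1}"
  unfolding Eg_def
proof (rule connected_component_e_t_eq_sheet)
  show "(z, a, r) \<in> Lt \<inter> proj -` Ebar (proj e_t) \<longleftrightarrow> r * cos a \<in> {1}" if "(z, a, r) \<in> Lt" for z a r
    using that proj_in_Lset[OF that] by (simp add: Ebar_def form_e_t_proj)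
qed auto

lemma Ig_e_t: "Ig e_t = sheet {1..}"
  unfolding Ig_def
proof (rule connected_component_e_t_eq_sheet)
  show "(z, a, r) \<in> Lt \<inter> proj -` Ibar (proj e_t) \<longleftrightarrow> r * cos a \<in> {1..}" if "(z, a, r) \<in> Lt" for z a r
    using that proj_in_Lset[OF that] by (simp add: Ibar_def form_e_t_proj)
qed (auto simp: convex_real_interval)


lemma Lt_Int_cos_ge_1:
  "Lt \<inter> {p. \<bar>fst (snd p)\<bar> \<le> pi / 2 \<and> 1 \<le> snd (snd p) * cos (fst (snd p))} = sheet {1..}"
proof (rule set_eqI)
  fix p :: pt
  obtain z a r where p: "p = (z, a, r)"
    by (cases p)
  have "\<bar>a\<bar> < pi / 2" if "\<bar>a\<bar> \<le> pi / 2" "1 \<le> r * cos a"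
  proof (rule ccontr)
    assume "\<not> \<bar>a\<bar> < pi / 2"
    then have "cos a = 0"
      using that(1) by (intro cos_eq_0_if_abs_eq_pi_half) linarith
    then show False
      using that(2) by simp
  qed
  then show "p \<in> Lt \<inter> {p. \<bar>fst (snd p)\<bar> \<le> pi / 2 \<and> 1 \<le> snd (snd p) * cos (fst (snd p))} \<longleftrightarrow> p \<in> sheet {1..}"
    unfolding p by (auto simp: mem_sheet_iff)
qed

lemma closed_cos_ge_1: "closed {p::pt. \<bar>fst (snd p)\<bar> \<le> pi / 2 \<and> 1 \<le> snd (snd p) * cos (fst (snd p))}"
  by (intro closed_Collect_conj closed_Collect_le continuous_intros)

lemma open_sheet_gt_1: "open (sheet {1<..})"
proof -
  have "sheet {1<..} = Lt \<inter> {p. \<bar>fst (snd p)\<bar> < pi / 2} \<inter> {p. 1 < snd (snd p) * cos (fst (snd p))}"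
    by (auto simp: mem_sheet_iff)
  then show ?thesis
    by (simp only:) (intro open_Int open_Lt open_Collect_less continuous_intros)
qed

lemma sheet_gt_1_in_components: "sheet {1<..} \<in> components (Lt - sheet {1})"
proof -
  let ?F = "{p::pt. \<bar>fst (snd p)\<bar> \<le> pi / 2 \<and> 1 \<le> snd (snd p) * cos (fst (snd p))}"
  have x: "(0, 0, 2) \<in> sheet {1<..}"
    by (simp add: mem_sheet_iff mem_Lt_iff)
  have disj: "sheet {1<..} \<inter> sheet {1} = {}" and sub: "sheet {1<..} \<subseteq> Lt"
    by (auto simp: mem_sheet_iff)
  then have eq: "(Lt - sheet {1}) \<inter> sheet {1<..} = sheet {1<..}"
    by blast
  have "connected_component_set (Lt - sheet {1}) (0, 0, 2) = (Lt - sheet {1}) \<inter> sheet {1<..}"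
  proof (rule connected_component_set_eq_Int_open)
    show "connected ((Lt - sheet {1}) \<inter> sheet {1<..})"
      unfolding eq by (rule connected_sheet) (auto simp: convex_real_interval)
    show "(0, 0, 2) \<in> (Lt - sheet {1}) \<inter> sheet {1<..}"
      using x eq by simp
    show "open (sheet {1<..})" "open (- ?F)"
      using open_sheet_gt_1 closed_cos_ge_1 by auto
    have "sheet {1..} \<subseteq> sheet {1} \<union> sheet {1<..}"
      by (auto simp: mem_sheet_iff)
    then show "Lt - sheet {1} \<subseteq> sheet {1<..} \<union> - ?F"
      using Lt_Int_cos_ge_1 by blast
    show "sheet {1<..} \<inter> - ?F = {}"
      by (auto simp: mem_sheet_iff)
  qed
  moreover have "(0, 0, 2) \<in> Lt - sheet {1}"
    using x disj sub by blast
  ultimately show ?thesis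
    unfolding components_iff eq by metis
qed

lemma Lt_Int_closure_sheet_gt_1: "Lt \<inter> closure (sheet {1<..}) = sheet {1..}"
proof
  let ?F = "{p::pt. \<bar>fst (snd p)\<bar> \<le> pi / 2 \<and> 1 \<le> snd (snd p) * cos (fst (snd p))}"
  have "sheet {1<..} \<subseteq> ?F"
    by (auto simp: mem_sheet_iff)
  then have "closure (sheet {1<..}) \<subseteq> ?F"
    using closed_cos_ge_1 by (rule closure_minimal)
  then show "Lt \<inter> closure (sheet {1<..}) \<subseteq> sheet {1..}"
    using Lt_Int_cos_ge_1 by blast
  show "sheet {1..} \<subseteq> Lt \<inter> closure (sheet {1<..})"
  proof
    fix p
    assume p: "p \<in> sheet {1..}"
    obtain z a r where p_eq: "p = (z, a, r)"
      by (cases p)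
    have L: "0 < r" "cmod z < r" "\<bar>a\<bar> < pi / 2" "1 \<le> r * cos a"
      using p by (auto simp: p_eq mem_sheet_iff mem_Lt_iff)
    then have "0 < cos a"
      by (auto intro: cos_gt_zero_pi)
    define s where "s n = (z, a, r + 1 / real (Suc n))" for n
    have "s n \<in> sheet {1<..}" for n
    proof -
      have "0 < 1 / real (Suc n)"
        by simp
      then have "r * cos a < (r + 1 / real (Suc n)) * cos a"
        using \<open>0 < cos a\<close> by (simp add: distrib_right)
      moreover have "0 < r + 1 / real (Suc n)" "cmod z < r + 1 / real (Suc n)"
        using L \<open>0 < 1 / real (Suc n)\<close> by linarith+
      ultimately show ?thesis
        using L unfolding s_def mem_sheet_iff mem_Lt_iff by simp
    qed
    moreover have "(\<lambda>n. r + 1 / real (Suc n)) \<longlonglongrightarrow> r + 0"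
      by (intro tendsto_add tendsto_const LIMSEQ_Suc[OF lim_1_over_n])
    then have "s \<longlonglongrightarrow> (z, a, r)"
      unfolding s_def by (intro tendsto_Pair tendsto_const) simp
    ultimately have "p \<in> closure (sheet {1<..})"
      unfolding closure_sequential p_eq by blast
    then show "p \<in> Lt \<inter> closure (sheet {1<..})"
      using p by (auto simp: p_eq mem_sheet_iff)
  qed
qed

lemma Hg_e_t_subset: "Hg e_t \<subseteq> Lt - sheet {1<..}"
  unfolding Hg_eq_far_side Eg_e_t Ig_e_t
  by (rule far_side_subset[OF sheet_gt_1_in_components Lt_Int_closure_sheet_gt_1 open_sheet_gt_1])

section \<open>Rotations\<close>

lemma rotation_in_Gt: "(0, \<theta>, 1) \<in> Gt"
  by (simp add: mem_Gt_iff)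

lemma act_rotation_left: "0 < r \<Longrightarrow> act (0, \<theta>, 1) (z, a, r) = (cis (- \<theta>) * z, \<theta> + a, r)"
  by (simp add: act_explicit cis_cnj norm_mult)

lemma act_rotation_right: "(zg, ag, rg) \<in> Gt \<Longrightarrow> act (zg, ag, rg) (0, \<theta>, 1) = (zg * cis \<theta>, ag + \<theta>, rg)"
  by (simp add: act_explicit mem_Gt_iff norm_mult)

lemma mob_rotation: "mob (0, b, 1) \<zeta> = cis (- 2 * b) * \<zeta>"
proof -
  have "mob (0, b, 1) \<zeta> = cis (- b) * \<zeta> / cis b"
    by (simp add: mob_def Let_def cis_cnj)
  also have "\<dots> = cis (- 2 * b) * \<zeta>"
    by (simp add: cis_divide[symmetric] divide_simps) (simp add: cis_mult)
  finally show ?thesis .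
qed

lemma mob_act_rotation_0:
  assumes "g \<in> Gt"
  shows "mob (act g (0, \<theta>, 1)) 0 = mob g 0"
proof -
  obtain zg ag rg where g: "g = (zg, ag, rg)"
    by (cases g)
  have "0 < rg"
    using assms by (simp add: g mem_Gt_iff)
  then have "mob (zg * cis \<theta>, ag + \<theta>, rg) 0 = mob (zg, ag, rg) 0"
    by (simp add: mob_def Let_def cis_cnj field_simps cis_mult[symmetric])
  then show ?thesis
    using act_rotation_right assms by (simp add: g)
qed

lemma Hg_rotation:
  assumes c: "(z, a, r) \<in> Hg (0, \<theta>, 1)" and a: "\<bar>a - \<theta>\<bar> < pi / 2"
  shows "r * cos (a - \<theta>) \<le> 1"
proof -
  have "Hg (0, \<theta>, 1) = act (0, \<theta>, 1) ` Hg e_t"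
    using Hg_act[OF rotation_in_Gt e_t_in_Lt] act_e_t[OF rotation_in_Gt] by simp
  then obtain c' where c': "c' \<in> Lt - sheet {1<..}" "(z, a, r) = act (0, \<theta>, 1) c'"
    using c Hg_e_t_subset by blast
  obtain z' a' r' where c'_eq: "c' = (z', a', r')"
    by (cases c')
  have "0 < r'"
    using c'(1) by (simp add: c'_eq mem_Lt_iff)
  then have "a = \<theta> + a'" "r = r'"
    using c'(2) by (simp_all add: c'_eq act_rotation_left)
  moreover have "\<not> (\<bar>a'\<bar> < pi / 2 \<and> 1 < r' * cos a')"
    using c'(1) by (simp add: c'_eq mem_sheet_iff)
  ultimately show ?thesis
    using a by simp
qed

lemma abs_angle_le_half_rotation:
  assumes c: "(z, a, r) \<in> sheet {1}" and \<theta>: "0 < \<theta>" "\<theta> < pi"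
    and left: "\<bar>a - \<theta>\<bar> < pi / 2 \<Longrightarrow> r * cos (a - \<theta>) \<le> 1"
    and right: "\<bar>a + \<theta>\<bar> < pi / 2 \<Longrightarrow> r * cos (a + \<theta>) \<le> 1"
  shows "\<bar>a\<bar> \<le> \<theta> / 2"
proof (rule ccontr)
  assume "\<not> \<bar>a\<bar> \<le> \<theta> / 2"
  have a: "\<bar>a\<bar> < pi / 2" "r * cos a = 1" "0 < r"
    using c by (simp_all add: mem_sheet_iff mem_Lt_iff)
  have closer: "1 < r * cos (a - s)" if "\<bar>a - s\<bar> < \<bar>a\<bar>" for s
  proof -
    have "cos \<bar>a\<bar> < cos \<bar>a - s\<bar>"
      using that a(1) by (intro cos_monotone_0_pi) auto
    then have "r * cos a < r * cos (a - s)"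
      using a(3) by simp
    then show ?thesis
      using a(2) by simp
  qed
  show False
  proof (cases "0 \<le> a")
    case True
    then have "\<bar>a - \<theta>\<bar> < \<bar>a\<bar>"
      using \<open>\<not> \<bar>a\<bar> \<le> \<theta> / 2\<close> \<theta> by linarith
    then show False
      using closer[of \<theta>] left a(1) by linarith
  next
    case False
    then have "\<bar>a - (- \<theta>)\<bar> < \<bar>a\<bar>"
      using \<open>\<not> \<bar>a\<bar> \<le> \<theta> / 2\<close> \<theta> by linarith
    then show False
      using closer[of "- \<theta>"] right a(1) by simp
  qed
qed

section \<open>Discrete subgroups\<close>

lemma subgroup_Gt_subset: "subgroup_Gt \<Gamma> \<Longrightarrow> \<Gamma> \<subseteq> Gt"
  by (simp add: subgroup_Gt_def)

lemma subgroup_Gt_act: "subgroup_Gt \<Gamma> \<Longrightarrow> g \<in> \<Gamma> \<Longrightarrow> h \<in> \<Gamma> \<Longrightarrow> act g h \<in> \<Gamma>"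
  by (simp add: subgroup_Gt_def)

lemma subgroup_Gt_e_t: "subgroup_Gt \<Gamma> \<Longrightarrow> e_t \<in> \<Gamma>"
  by (simp add: subgroup_Gt_def)

lemma subgroup_Gt_pt_inv:
  assumes sub: "subgroup_Gt \<Gamma>" and g: "g \<in> \<Gamma>"
  shows "pt_inv g \<in> \<Gamma>"
proof -
  obtain h where h: "h \<in> \<Gamma>" "act g h = e_t"
    using sub g unfolding subgroup_Gt_def by blast
  have "g \<in> Gt" "h \<in> Lt"
    using sub g h(1) subgroup_Gt_subset Gt_subset_Lt by blast+
  then have "h = act (pt_inv g) e_t"
    using act_pt_inv_act h(2) by metis
  also have "\<dots> = pt_inv g"
    using act_e_t pt_inv_in_Gt \<open>g \<in> Gt\<close> by blast
  finally show ?thesis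
    using h(1) by simp
qed

lemma closed_Gt: "closed Gt"
proof -
  have eq: "Gt = {p. 1 \<le> snd (snd p)} \<inter> {p. (cmod (fst p))\<^sup>2 = (snd (snd p))\<^sup>2 - 1}"
    by (auto simp: mem_Gt_iff_one_le)
  show ?thesis
    unfolding eq by (intro closed_Int closed_Collect_le closed_Collect_eq continuous_intros)
qed

lemma isCont_act_pt_inv:
  assumes "pt_inv x \<in> Lt" "y \<in> Lt"
  shows "isCont (\<lambda>p. act (pt_inv (fst p)) (snd p)) (x, y)"
proof -
  have eq: "pt_inv = (\<lambda>g. (- fst g, - fst (snd g), snd (snd g)))"
    by (auto simp: pt_inv_def)
  have "isCont (\<lambda>p::pt \<times> pt. (pt_inv (fst p), snd p)) (x, y)"
    unfolding eq by (intro continuous_intros)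
  moreover have "isCont (\<lambda>p. act (fst p) (snd p)) (pt_inv x, y)"
    using continuous_on_act open_Times[OF open_Lt open_Lt] assms
    by (simp add: continuous_on_eq_continuous_at)
  ultimately have "isCont ((\<lambda>p. act (fst p) (snd p)) \<circ> (\<lambda>p. (pt_inv (fst p), snd p))) (x, y)"
    by (intro continuous_at_compose) simp_all
  then show ?thesis
    by (simp add: o_def)
qed

lemma finite_subgroup_Int_bounded:
  assumes sub: "subgroup_Gt \<Gamma>" and disc: "discrete \<Gamma>" and K: "bounded K"
  shows "finite (\<Gamma> \<inter> K)"
proof (rule ccontr)
  assume inf: "infinite (\<Gamma> \<inter> K)"
  obtain c R where "K \<subseteq> cball c R"
    using K bounded_subset_cball by blast
  then have "\<Gamma> \<inter> K \<subseteq> cball c R"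
    by blast
  from Heine_Borel_imp_Bolzano_Weierstrass[OF compact_cball inf this]
  obtain x where x: "x islimpt (\<Gamma> \<inter> K)"
    by blast
  have "\<Gamma> \<inter> K \<subseteq> Gt"
    using subgroup_Gt_subset[OF sub] by blast
  with x have "x islimpt Gt"
    by (rule islimpt_subset)
  then have "x \<in> Gt"
    using closed_Gt closed_limpt by blast
  then have x_Lt: "pt_inv x \<in> Lt" "x \<in> Lt"
    using pt_inv_in_Gt Gt_subset_Lt by blast+
  define F where "F = (\<lambda>p. act (pt_inv (fst p)) (snd p))"
  have "F (x, x) = e_t"
    using act_pt_inv_act[OF \<open>x \<in> Gt\<close> e_t_in_Lt] act_e_t[OF \<open>x \<in> Gt\<close>] by (simp add: F_def)
  txt \<open>Two distinct elements \<open>g1, g2\<close> of \<open>\<Gamma>\<close> close to \<open>x\<close> give an element \<open>F (g1, g2) \<noteq> e_t\<close>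
    of \<open>\<Gamma>\<close> close to \<open>e_t\<close>.\<close>
  have "e_t isolated_in \<Gamma>"
    using disc subgroup_Gt_e_t[OF sub] by (rule discreteD)
  then obtain \<epsilon> where \<epsilon>: "\<epsilon> > 0" "\<And>y. y \<in> \<Gamma> \<Longrightarrow> dist e_t y < \<epsilon> \<Longrightarrow> y = e_t"
    unfolding isolated_in_dist_Ex_iff by blast
  have "isCont F (x, x)"
    unfolding F_def by (rule isCont_act_pt_inv[OF x_Lt])
  then obtain \<delta> where \<delta>: "\<delta> > 0" "\<And>p. dist p (x, x) < \<delta> \<Longrightarrow> dist (F p) (F (x, x)) < \<epsilon>"
    using \<epsilon>(1) unfolding continuous_at_eps_delta by blast
  obtain g1 where g1: "g1 \<in> \<Gamma> \<inter> K" "g1 \<noteq> x" "dist g1 x < \<delta> / 2"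
    using x half_gt_zero[OF \<delta>(1)] unfolding islimpt_approachable by blast
  have "0 < min (\<delta> / 2) (dist g1 x)"
    using \<delta>(1) g1(2) by simp
  then obtain g2 where g2: "g2 \<in> \<Gamma> \<inter> K" "g2 \<noteq> x" "dist g2 x < min (\<delta> / 2) (dist g1 x)"
    using x unfolding islimpt_approachable by blast
  have "dist (g1, g2) (x, x) \<le> dist (g1, g2) (x, g2) + dist (x, g2) (x, x)"
    by (rule dist_triangle)
  also have "\<dots> = dist g1 x + dist g2 x"
    by (simp add: dist_Pair_Pair)
  finally have "dist (g1, g2) (x, x) < \<delta>"
    using g1(3) g2(3) by simp
  then have "dist (F (g1, g2)) e_t < \<epsilon>"
    using \<delta>(2) \<open>F (x, x) = e_t\<close> by metis
  moreover have "F (g1, g2) \<in> \<Gamma>"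
    using subgroup_Gt_act[OF sub subgroup_Gt_pt_inv[OF sub] ] g1(1) g2(1) by (simp add: F_def)
  ultimately have F_e: "F (g1, g2) = e_t"
    using \<epsilon>(2) by (simp add: dist_commute)
  have "g1 \<in> Gt" "g2 \<in> Lt"
    using g1(1) g2(1) subgroup_Gt_subset[OF sub] Gt_subset_Lt by blast+
  then have "g2 = act g1 (act (pt_inv g1) g2)"
    by (simp add: act_act_pt_inv)
  also have "\<dots> = g1"
    using F_e act_e_t[OF \<open>g1 \<in> Gt\<close>] by (simp add: F_def)
  finally show False
    using g2(3) by simp
qed

section \<open>A rotation in \<open>\<Gamma>\<close> by an angle in \<open>(0, pi)\<close>\<close>

lemma mob_fixes_0_imp_rotation:
  assumes "g \<in> Gt" "mob g 0 = 0"
  obtains b where "g = (0, b, 1)"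
proof -
  obtain z a r where g: "g = (z, a, r)"
    by (cases g)
  have r: "1 \<le> r" "(cmod z)\<^sup>2 = r\<^sup>2 - 1"
    using assms(1) by (simp_all add: g mem_Gt_iff_one_le)
  then have "z = 0"
    using assms(2) by (simp add: g mob_def Let_def)
  then have "r = 1"
    using r by (simp add: power2_eq_1_iff)
  then show ?thesis
    using that g \<open>z = 0\<close> by blast
qed

lemma rotation_add_mem:
  assumes "subgroup_Gt \<Gamma>" "(0, b, 1) \<in> \<Gamma>" "(0, c, 1) \<in> \<Gamma>"
  shows "(0, b + c, 1) \<in> \<Gamma>"
  using subgroup_Gt_act[OF assms] act_rotation_left[of 1 b 0 c] by simp

lemma rotation_uminus_mem:
  assumes "subgroup_Gt \<Gamma>" "(0, b, 1) \<in> \<Gamma>"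
  shows "(0, - b, 1) \<in> \<Gamma>"
  using subgroup_Gt_pt_inv[OF assms] by (simp add: pt_inv_def)

lemma rotation_level_mem:
  assumes "has_level \<Gamma> k"
  shows "(0, of_int m * (real k * pi), 1) \<in> \<Gamma>"
proof -
  have "(0, of_int (int k * m) * pi, 1) \<in> \<Gamma> \<inter> Zc"
    using assms unfolding has_level_def by blast
  then show ?thesis
    by (simp add: mult.assoc mult.left_commute)
qed

lemma rotations_separated:
  assumes sub: "subgroup_Gt \<Gamma>" and no_small: "\<nexists>\<theta>. 0 < \<theta> \<and> \<theta> < pi \<and> (0, \<theta>, 1) \<in> \<Gamma>"
    and b: "(0, b, 1) \<in> \<Gamma>" and c: "(0, c, 1) \<in> \<Gamma>" and close: "\<bar>b - c\<bar> < pi"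
  shows "b = c"
proof -
  have "(0, b - c, 1) \<in> \<Gamma>" "(0, c - b, 1) \<in> \<Gamma>"
    using rotation_add_mem[OF sub _ rotation_uminus_mem[OF sub]] b c by fastforce+
  then show ?thesis
    using no_small close by (metis abs_minus_commute abs_of_pos diff_gt_0_iff_gt linorder_neqE_linordered_idom)
qed

text \<open>Representatives in \<open>[0, k pi)\<close>: the rotation by \<open>b\<close> acts on the disk as multiplication by
  \<open>cis (-2 b)\<close>, and \<open>\<Gamma>\<close> contains the rotation by \<open>k pi\<close>.\<close>
lemma isotropy_bar_0_subset:
  assumes sub: "subgroup_Gt \<Gamma>" and lev: "has_level \<Gamma> k"
  shows "isotropy_bar \<Gamma> 0 \<subseteq> (\<lambda>b \<zeta>. if cmod \<zeta> < 1 then mob (0, b, 1) \<zeta> else 0)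
    ` {b. (0, b, 1) \<in> \<Gamma> \<and> 0 \<le> b \<and> b < real k * pi}"
proof
  fix f
  assume "f \<in> isotropy_bar \<Gamma> 0"
  then obtain g where g: "g \<in> \<Gamma>" "mob g 0 = 0" "f = (\<lambda>\<zeta>. if cmod \<zeta> < 1 then mob g \<zeta> else 0)"
    unfolding isotropy_bar_def by blast
  then obtain a where g_eq: "g = (0, a, 1)"
    using mob_fixes_0_imp_rotation subgroup_Gt_subset[OF sub] by blast
  have "0 < real k * pi"
    using lev by (simp add: has_level_def)
  define m where "m = \<lfloor>a / (real k * pi)\<rfloor>"
  define b where "b = a + of_int (- m) * (real k * pi)"
  have "(0, b, 1) \<in> \<Gamma>"
    unfolding b_def using rotation_add_mem[OF sub _ rotation_level_mem[OF lev]] g(1) g_eq by blast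
  moreover have "of_int m \<le> a / (real k * pi)" "a / (real k * pi) < of_int m + 1"
    unfolding m_def by linarith+
  then have "0 \<le> b" "b < real k * pi"
    using \<open>0 < real k * pi\<close> unfolding b_def by (simp_all add: field_simps)
  moreover have "cis (- 2 * b) = cis (- 2 * a) * cis (2 * pi * of_int (m * int k))"
    by (simp add: b_def cis_mult algebra_simps)
  then have mob_eq: "mob g \<zeta> = mob (0, b, 1) \<zeta>" for \<zeta>
    by (simp add: g_eq mob_rotation)
  have "f = (\<lambda>\<zeta>. if cmod \<zeta> < 1 then mob (0, b, 1) \<zeta> else 0)"
    unfolding g(3) mob_eq ..
  ultimately show "f \<in> (\<lambda>b \<zeta>. if cmod \<zeta> < 1 then mob (0, b, 1) \<zeta> else 0)
      ` {b. (0, b, 1) \<in> \<Gamma> \<and> 0 \<le> b \<and> b < real k * pi}"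
    by (intro image_eqI[where x = b]) simp_all
qed

lemma card_rotations_below_level:
  assumes sub: "subgroup_Gt \<Gamma>" and no_small: "\<nexists>\<theta>. 0 < \<theta> \<and> \<theta> < pi \<and> (0, \<theta>, 1) \<in> \<Gamma>"
  shows "finite {b. (0, b, 1) \<in> \<Gamma> \<and> 0 \<le> b \<and> b < real k * pi}"
    and "card {b. (0, b, 1) \<in> \<Gamma> \<and> 0 \<le> b \<and> b < real k * pi} \<le> k"
proof -
  let ?R = "{b. (0, b, 1) \<in> \<Gamma> \<and> 0 \<le> b \<and> b < real k * pi}"
  have inj: "inj_on (\<lambda>b. nat \<lfloor>b / pi\<rfloor>) ?R"
  proof
    fix b c
    assume b: "b \<in> ?R" and c: "c \<in> ?R" and "nat \<lfloor>b / pi\<rfloor> = nat \<lfloor>c / pi\<rfloor>"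
    moreover have "0 \<le> \<lfloor>b / pi\<rfloor>" "0 \<le> \<lfloor>c / pi\<rfloor>"
      using b c by simp_all
    ultimately have "\<lfloor>b / pi\<rfloor> = \<lfloor>c / pi\<rfloor>"
      by (metis eq_nat_nat_iff)
    then have "\<bar>b / pi - c / pi\<bar> < 1"
      by linarith
    then have "\<bar>b - c\<bar> < pi"
      by (simp add: diff_divide_distrib[symmetric] abs_divide divide_less_eq)
    then show "b = c"
      using rotations_separated[OF sub no_small] b c by blast
  qed
  have "nat \<lfloor>b / pi\<rfloor> < k" if "b \<in> ?R" for b
  proof -
    have "b / pi < real k" "0 \<le> b / pi"
      using that by (simp_all add: divide_less_eq)
    then have "\<lfloor>b / pi\<rfloor> < int k" "0 \<le> \<lfloor>b / pi\<rfloor>"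
      by (simp_all add: floor_less_iff)
    then show ?thesis
      by (simp add: nat_less_iff)
  qed
  then have img: "(\<lambda>b. nat \<lfloor>b / pi\<rfloor>) ` ?R \<subseteq> {..<k}"
    by blast
  show "finite ?R"
    using inj_on_finite[OF inj img] by simp
  show "card ?R \<le> k"
    using card_inj_on_le[OF inj img] by simp
qed

lemma exists_small_rotation:
  assumes sub: "subgroup_Gt \<Gamma>" and lev: "has_level \<Gamma> k" and card: "k < card (isotropy_bar \<Gamma> 0)"
  obtains \<theta> where "0 < \<theta>" "\<theta> < pi" "(0, \<theta>, 1) \<in> \<Gamma>"
proof -
  let ?R = "{b. (0, b, 1) \<in> \<Gamma> \<and> 0 \<le> b \<and> b < real k * pi}"
  let ?f = "\<lambda>b \<zeta>. if cmod \<zeta> < 1 then mob (0, b, 1) \<zeta> else (0::complex)"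
  have "\<exists>\<theta>. 0 < \<theta> \<and> \<theta> < pi \<and> (0, \<theta>, 1) \<in> \<Gamma>"
  proof (rule ccontr)
    assume no_small: "\<nexists>\<theta>. 0 < \<theta> \<and> \<theta> < pi \<and> (0, \<theta>, 1) \<in> \<Gamma>"
    have "card (isotropy_bar \<Gamma> 0) \<le> card (?f ` ?R)"
      using isotropy_bar_0_subset[OF sub lev] card_rotations_below_level(1)[OF sub no_small]
      by (intro card_mono) auto
    also have "\<dots> \<le> card ?R"
      using card_rotations_below_level(1)[OF sub no_small] by (rule card_image_le)
    also have "\<dots> \<le> k"
      using card_rotations_below_level(2)[OF sub no_small] .
    finally show False
      using card by simp
  qed
  then show ?thesis
    using that by blast
qed

section \<open>Local finiteness\<close>

lemma Hg_subset_Lt: "Hg g \<subseteq> Lt"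
  by (simp add: Hg_def)

lemma mem_Hg_rotation_if_act_mem_Qx:
  assumes sub: "subgroup_Gt \<Gamma>" and g: "g \<in> \<Gamma>" and rot: "(0, \<theta>, 1) \<in> \<Gamma>" and c: "c \<in> Lt"
    and Q: "act g c \<in> Qx \<Gamma> 0 (mob g 0)"
  shows "c \<in> Hg (0, \<theta>, 1)"
proof -
  have "g \<in> Gt" "(0, \<theta>, 1) \<in> Lt"
    using g subgroup_Gt_subset[OF sub] rotation_in_Gt Gt_subset_Lt by blast+
  have "act g (0, \<theta>, 1) \<in> \<Gamma>" "mob (act g (0, \<theta>, 1)) 0 = mob g 0"
    using subgroup_Gt_act[OF sub g rot] mob_act_rotation_0[OF \<open>g \<in> Gt\<close>] by simp_all
  then have "act g c \<in> Hg (act g (0, \<theta>, 1))"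
    using Q unfolding Qx_def by blast
  then obtain c' where c': "c' \<in> Hg (0, \<theta>, 1)" "act g c = act g c'"
    unfolding Hg_act[OF \<open>g \<in> Gt\<close> \<open>(0, \<theta>, 1) \<in> Lt\<close>] by blast
  have "c = act (pt_inv g) (act g c')"
    using act_pt_inv_act[OF \<open>g \<in> Gt\<close> c] c'(2) by simp
  also have "\<dots> = c'"
    using act_pt_inv_act[OF \<open>g \<in> Gt\<close>] c'(1) Hg_subset_Lt by blast
  finally show ?thesis
    using c'(1) by simp
qed

lemma Eg_Int_Qx_preimage:
  assumes sub: "subgroup_Gt \<Gamma>" and g: "g \<in> \<Gamma>"
    and rot: "(0, \<theta>, 1) \<in> \<Gamma>" "(0, - \<theta>, 1) \<in> \<Gamma>" and \<theta>: "0 < \<theta>" "\<theta> < pi"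
    and b: "b \<in> Eg g \<inter> Qx \<Gamma> 0 (mob g 0)"
  obtains z a r where "(z, a, r) \<in> sheet {1}" "\<bar>a\<bar> \<le> \<theta> / 2" "b = act g (z, a, r)"
proof -
  have "g \<in> Gt"
    using g subgroup_Gt_subset[OF sub] by blast
  have "Eg g = act g ` sheet {1}"
    using Eg_act[OF \<open>g \<in> Gt\<close> e_t_in_Lt] act_e_t[OF \<open>g \<in> Gt\<close>] Eg_e_t by simp
  then obtain c where c: "c \<in> sheet {1}" "b = act g c"
    using b by blast
  obtain z a r where c_eq: "c = (z, a, r)"
    by (cases c)
  have "c \<in> Lt"
    using c(1) by (simp add: c_eq mem_sheet_iff)
  then have "(z, a, r) \<in> Hg (0, \<theta>, 1)" "(z, a, r) \<in> Hg (0, - \<theta>, 1)"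
    using mem_Hg_rotation_if_act_mem_Qx[OF sub g] rot b c(2) by (simp_all add: c_eq)
  then have "\<bar>a\<bar> \<le> \<theta> / 2"
    using abs_angle_le_half_rotation[of z a r \<theta>] c(1) \<theta> Hg_rotation[of z a r "- \<theta>"] Hg_rotation[of z a r \<theta>]
    by (simp add: c_eq)
  then show ?thesis
    using that c c_eq by blast
qed

lemma act_radius_ge:
  assumes g: "(zg, ag, rg) \<in> Gt" and c: "(z, a, r) \<in> Lt"
  shows "rg * (r - cmod z) \<le> snd (snd (act (zg, ag, rg) (z, a, r)))"
proof -
  let ?w = "(of_real rg * cis ag) * (of_real r * cis a)"
  have pos: "0 < rg" "cmod zg < rg" "0 < r"
    using g c by (simp_all add: mem_Gt_iff mem_Lt_iff)
  have "rg * r - cmod zg * cmod z = cmod ?w - cmod (cnj zg * z)"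
    using pos by (simp add: norm_mult)
  also have "\<dots> \<le> cmod (cnj zg * z + ?w)"
    by (metis add.commute norm_diff_ineq)
  finally have "rg * r - cmod zg * cmod z \<le> snd (snd (act (zg, ag, rg) (z, a, r)))"
    by (simp add: act_explicit)
  moreover have "cmod zg * cmod z \<le> rg * cmod z"
    using pos by (simp add: mult_right_mono)
  ultimately show ?thesis
    by (simp add: right_diff_distrib)
qed

lemma act_radius_bound:
  assumes g: "(zg, ag, rg) \<in> Gt" and c: "(z, a, r) \<in> sheet {1}" "\<bar>a\<bar> \<le> \<theta> / 2"
    and \<theta>: "0 < \<theta>" "\<theta> < pi"
    and b: "act (zg, ag, rg) (z, a, r) = (zb, ab, rb)" and \<sigma>: "\<sigma> < rb\<^sup>2 - (cmod zb)\<^sup>2"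
  shows "rg * (\<sigma> * cos (\<theta> / 2)) \<le> 2 * rb"
proof -
  have cL: "(z, a, r) \<in> Lt" and "r * cos a = 1" and pos: "0 < r" "cmod z < r"
    using c(1) by (simp_all add: mem_sheet_iff mem_Lt_iff)
  have "0 < rg"
    using g by (simp add: mem_Gt_iff)
  have "cos (\<theta> / 2) \<le> cos \<bar>a\<bar>"
    using c(2) \<theta> by (intro cos_monotone_0_pi_le) auto
  then have "r * cos (\<theta> / 2) \<le> r * cos a"
    using pos(1) by simp
  then have rc: "r * cos (\<theta> / 2) \<le> 1" "0 < cos (\<theta> / 2)"
    using \<open>r * cos a = 1\<close> \<theta> by (auto intro!: cos_gt_zero_pi)
  have "(zb, ab, rb) \<in> Lt"
    using act_in_Lt[OF g cL] b by simp
  then have "rb\<^sup>2 - (cmod zb)\<^sup>2 = r\<^sup>2 - (cmod z)\<^sup>2"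
    using form_act[OF g cL cL] by (simp add: b form_proj_self cL)
  also have "\<dots> = (r - cmod z) * (r + cmod z)"
    by (simp add: power2_eq_square algebra_simps)
  also have "\<dots> \<le> (r - cmod z) * (2 * r)"
    using pos by (intro mult_left_mono) auto
  finally have "\<sigma> \<le> (r - cmod z) * (2 * r)"
    using \<sigma> by linarith
  then have "\<sigma> * cos (\<theta> / 2) \<le> (r - cmod z) * (2 * r) * cos (\<theta> / 2)"
    using rc(2) by (simp add: mult_right_mono)
  also have "\<dots> = (r - cmod z) * 2 * (r * cos (\<theta> / 2))"
    by (simp add: algebra_simps)
  also have "\<dots> \<le> (r - cmod z) * 2"
    using rc pos by (simp add: mult_left_le)
  finally have "rg * (\<sigma> * cos (\<theta> / 2)) \<le> 2 * (rg * (r - cmod z))"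
    using \<open>0 < rg\<close> by (simp add: mult_left_mono)
  also have "\<dots> \<le> 2 * rb"
    using act_radius_ge[OF g cL] b by simp
  finally show ?thesis .
qed

lemma Eg_Int_Qx_locally_bounded:
  assumes sub: "subgroup_Gt \<Gamma>" and rot: "(0, \<theta>, 1) \<in> \<Gamma>" "(0, - \<theta>, 1) \<in> \<Gamma>"
    and \<theta>: "0 < \<theta>" "\<theta> < pi" and a: "a \<in> Lt"
  obtains U K where "open U" "a \<in> U" "bounded K"
    "{g \<in> \<Gamma>. Eg g \<inter> Qx \<Gamma> 0 (mob g 0) \<inter> U \<noteq> {}} \<subseteq> K"
proof -
  obtain za aa ra where a_eq: "a = (za, aa, ra)"
    by (cases a)
  define \<sigma> where "\<sigma> = (ra\<^sup>2 - (cmod za)\<^sup>2) / 2"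
  have "cmod za < ra"
    using a by (simp add: a_eq mem_Lt_iff)
  then have "0 < \<sigma>"
    unfolding \<sigma>_def by (simp add: power_strict_mono)
  define U where "U = Lt \<inter> ball a 1 \<inter> {b. \<sigma> < (snd (snd b))\<^sup>2 - (cmod (fst b))\<^sup>2}"
  define R where "R = 2 * (ra + 1) / (\<sigma> * cos (\<theta> / 2))"
  define K where "K = cball (0::complex) R \<times> cball (0::real) (\<bar>aa\<bar> + 1 + pi) \<times> cball (0::real) R"
  have mem_K: "g \<in> K" if g: "g \<in> \<Gamma>" and b: "b \<in> Eg g \<inter> Qx \<Gamma> 0 (mob g 0) \<inter> U" for g b
  proof -
    obtain zg ag rg where g_eq: "g = (zg, ag, rg)"
      by (cases g)
    obtain zb ab rb where b_eq: "b = (zb, ab, rb)"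
      by (cases b)
    have gG: "(zg, ag, rg) \<in> Gt"
      using g subgroup_Gt_subset[OF sub] by (auto simp: g_eq)
    obtain z a' r where c: "(z, a', r) \<in> sheet {1}" "\<bar>a'\<bar> \<le> \<theta> / 2" "b = act g (z, a', r)"
      using Eg_Int_Qx_preimage[OF sub g rot \<theta>] b by blast
    have "dist b a < 1" "\<sigma> < rb\<^sup>2 - (cmod zb)\<^sup>2"
      using b by (simp_all add: U_def b_eq dist_commute)
    moreover have "dist rb ra \<le> dist b a" "dist ab aa \<le> dist b a"
      using dist_snd_le[of b a] dist_fst_le[of "snd b" "snd a"] dist_snd_le[of "snd b" "snd a"]
      by (simp_all add: a_eq b_eq)
    ultimately have rb: "rb \<le> ra + 1" and ab: "\<bar>ab\<bar> \<le> \<bar>aa\<bar> + 1" and \<sigma>b: "\<sigma> < rb\<^sup>2 - (cmod zb)\<^sup>2"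
      by (auto simp: dist_real_def)
    have act_b: "act (zg, ag, rg) (z, a', r) = (zb, ab, rb)"
      using c(3) by (simp add: g_eq b_eq)
    then have "rg * (\<sigma> * cos (\<theta> / 2)) \<le> 2 * rb"
      using act_radius_bound[OF gG c(1,2) \<theta> _ \<sigma>b] by blast
    moreover have "0 < \<sigma> * cos (\<theta> / 2)"
      using \<open>0 < \<sigma>\<close> \<theta> by (simp add: cos_gt_zero_pi)
    ultimately have "rg \<le> R"
      using rb by (simp add: R_def pos_le_divide_eq)
    moreover have "cmod zg < rg" "0 < rg"
      using gG by (simp_all add: mem_Gt_iff)
    moreover have "\<bar>ag\<bar> \<le> \<bar>aa\<bar> + 1 + pi"
    proof -
      have "g \<in> Lt" "(z, a', r) \<in> Lt" "\<bar>a'\<bar> < pi / 2"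
        using gG c(1) Gt_subset_Lt by (auto simp: g_eq mem_sheet_iff)
      then have "\<bar>ab - (ag + a')\<bar> < pi / 2"
        using act_angle_near_sum[of g "(z, a', r)"] by (simp add: g_eq act_b)
      then show ?thesis
        using \<open>\<bar>a'\<bar> < pi / 2\<close> ab by linarith
    qed
    ultimately have "zg \<in> cball 0 R" "ag \<in> cball 0 (\<bar>aa\<bar> + 1 + pi)" "rg \<in> cball 0 R"
      by simp_all
    then show "g \<in> K"
      by (simp add: K_def g_eq)
  qed
  have "open U"
    unfolding U_def by (intro open_Int open_Lt open_ball open_Collect_less continuous_intros)
  moreover have "a \<in> U"
    using a \<open>0 < \<sigma>\<close> by (simp add: U_def a_eq \<sigma>_def)
  moreover have "bounded K"
    unfolding K_def by (intro bounded_Times bounded_cball)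
  moreover have "{g \<in> \<Gamma>. Eg g \<inter> Qx \<Gamma> 0 (mob g 0) \<inter> U \<noteq> {}} \<subseteq> K"
  proof
    fix g
    assume "g \<in> {g \<in> \<Gamma>. Eg g \<inter> Qx \<Gamma> 0 (mob g 0) \<inter> U \<noteq> {}}"
    then obtain b where "g \<in> \<Gamma>" "b \<in> Eg g \<inter> Qx \<Gamma> 0 (mob g 0) \<inter> U"
      by blast
    then show "g \<in> K"
      by (rule mem_K)
  qed
  ultimately show ?thesis
    using that by blast
qed

theorem lemma4p3:
  fixes \<Gamma> :: "pt set" and k p :: nat and u :: complex
  assumes sub: "subgroup_Gt \<Gamma>"
    and disc: "discrete \<Gamma>"
    and lev: "has_level \<Gamma> k"
    and u_disk: "cmod u < 1"
    and u_fix: "\<exists>g\<in>\<Gamma>. mob g u = u \<and> (\<exists>\<zeta>. cmod \<zeta> < 1 \<and> mob g \<zeta> \<noteq> \<zeta>)"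
    and fin: "finite (isotropy_bar \<Gamma> u)"
    and ord: "card (isotropy_bar \<Gamma> u) = p"
    and pk: "p > k"
    and u0: "u = 0"
  shows "\<forall>a\<in>Lt. \<exists>U. open U \<and> a \<in> U \<and>
           finite {g \<in> \<Gamma>. Eg g \<inter> Qx \<Gamma> u (mob g u) \<inter> U \<noteq> {}}"
proof
  fix a
  assume "a \<in> Lt"
  have "k < card (isotropy_bar \<Gamma> 0)"
    using ord pk u0 by simp
  then obtain \<theta> where \<theta>: "0 < \<theta>" "\<theta> < pi" "(0, \<theta>, 1) \<in> \<Gamma>"
    using exists_small_rotation[OF sub lev] by blast
  have "(0, - \<theta>, 1) \<in> \<Gamma>"
    using rotation_uminus_mem[OF sub \<theta>(3)] .
  then obtain U K where U: "open U" "a \<in> U" "bounded K"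
    and K: "{g \<in> \<Gamma>. Eg g \<inter> Qx \<Gamma> 0 (mob g 0) \<inter> U \<noteq> {}} \<subseteq> K"
    using Eg_Int_Qx_locally_bounded[OF sub \<theta>(3) _ \<theta>(1,2) \<open>a \<in> Lt\<close>] by blast
  have "{g \<in> \<Gamma>. Eg g \<inter> Qx \<Gamma> u (mob g u) \<inter> U \<noteq> {}} \<subseteq> \<Gamma> \<inter> K"
    using K unfolding u0 by blast
  then have "finite {g \<in> \<Gamma>. Eg g \<inter> Qx \<Gamma> u (mob g u) \<inter> U \<noteq> {}}"
    using finite_subgroup_Int_bounded[OF sub disc U(3)] by (rule finite_subset)
  then show "\<exists>U. open U \<and> a \<in> U \<and> finite {g \<in> \<Gamma>. Eg g \<inter> Qx \<Gamma> u (mob g u) \<inter> U \<noteq> {}}"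
    using U by blast
qed

end
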